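(* Let $\mathcal T$ be an infinite set of positive integers and for each $t\in\mathcal T$ let $H_t$ be a triangle-free graph on $t$ vertices that is $d$-regular with $d=\Theta(t^{2/3})$ and all of whose eigenvalues other than the largest have absolute value $O(t^{1/3})$. Then for any choice of subgraphs $H'_t\subseteq H_t$ ($t\in\mathcal T$) with $|H'_t|=(1-o(1))|H_t|$, $H'_t$ has a connected component with $t-o(t)$ vertices (asymptotics as $t\to\infty$ in $\mathcal T$).
   Context: $|H|$ denotes the number of edges. Eigenvalues are those of the adjacency matrix. *)

theory Defs
  imports Complex_Main "Jordan_Normal_Form.Char_Poly"
begin

(* A graph on vertex set {0..<t} is given by an edge predicate E; only pairs of
   vertices below t are relevant. *)

definition simple_graph_on :: "nat \<Rightarrow> (nat \<Rightarrow> nat \<Rightarrow> bool) \<Rightarrow> bool" where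
  "simple_graph_on t E \<longleftrightarrow> (\<forall>u<t. \<forall>v<t. E u v \<longrightarrow> E v u) \<and> (\<forall>v<t. \<not> E v v)"

definition triangle_free_on :: "nat \<Rightarrow> (nat \<Rightarrow> nat \<Rightarrow> bool) \<Rightarrow> bool" where
  "triangle_free_on t E \<longleftrightarrow> \<not> (\<exists>u<t. \<exists>v<t. \<exists>w<t. E u v \<and> E v w \<and> E u w)"

definition regular_on :: "nat \<Rightarrow> (nat \<Rightarrow> nat \<Rightarrow> bool) \<Rightarrow> nat \<Rightarrow> bool" where
  "regular_on t E d \<longleftrightarrow> (\<forall>v<t. card {u. u < t \<and> E v u} = d)"

definition num_edges :: "nat \<Rightarrow> (nat \<Rightarrow> nat \<Rightarrow> bool) \<Rightarrow> nat" where
  "num_edges t E = card {(u, v). u < v \<and> v < t \<and> E u v}"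

definition subgraph_on :: "nat \<Rightarrow> (nat \<Rightarrow> nat \<Rightarrow> bool) \<Rightarrow> (nat \<Rightarrow> nat \<Rightarrow> bool) \<Rightarrow> bool" where
  "subgraph_on t E' E \<longleftrightarrow> simple_graph_on t E' \<and> (\<forall>u<t. \<forall>v<t. E' u v \<longrightarrow> E u v)"

definition adj_mat :: "nat \<Rightarrow> (nat \<Rightarrow> nat \<Rightarrow> bool) \<Rightarrow> real mat" where
  "adj_mat t E = mat t t (\<lambda>(i, j). if E i j then 1 else 0)"

definition reach_on :: "nat \<Rightarrow> (nat \<Rightarrow> nat \<Rightarrow> bool) \<Rightarrow> nat \<Rightarrow> nat \<Rightarrow> bool" where
  "reach_on t E = (\<lambda>u v. u < t \<and> v < t \<and> E u v)\<^sup>*\<^sup>*"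

definition component_on :: "nat \<Rightarrow> (nat \<Rightarrow> nat \<Rightarrow> bool) \<Rightarrow> nat \<Rightarrow> nat set" where
  "component_on t E v = {u. u < t \<and> reach_on t E v u}"

(* All eigenvalues other than the largest one (counted with algebraic multiplicity,
   i.e. lambda_2, ..., lambda_t) have absolute value at most B. The adjacency matrix
   is real symmetric, so all its eigenvalues are real. *)
definition nontrivial_eigs_bounded :: "real mat \<Rightarrow> real \<Rightarrow> bool" where
  "nontrivial_eigs_bounded A B \<longleftrightarrow>
     (\<forall>\<mu>. eigenvalue A \<mu> \<longrightarrow>
        \<bar>\<mu>\<bar> \<le> B \<or>
        ((\<forall>\<nu>. eigenvalue A \<nu> \<longrightarrow> \<nu> \<le> \<mu>) \<and> order \<mu> (char_poly A) = 1))"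

end

(* Let A be the adjacency matrix of the d-regular graph H on t vertices and B the bound on its
   nontrivial eigenvalues. The maximum of the Rayleigh quotient of A over the vectors orthogonal to
   the all-ones vector is an eigenvalue, and it is not the simple top eigenvalue d: a d-eigenvector
   orthogonal to the all-ones vector would make d a double root of the characteristic polynomial.
   So x^T A x <= B |x|^2 on that complement, and testing this on the balanced indicator of a vertex
   set S gives 2 (d - B) |S| (t - |S|) <= t e(S), where e(S) counts the ordered edges of H leaving S.
   For large t we have B <= d/2, as B = O(t^(1/3)) and d = Omega(t^(2/3)).
   If S is a union of components of H' with |H'| >= (1 - eps) |H|, every edge of H leaving S was
   deleted, so e(S) <= 2 eps |H| = eps t d and hence |S| (t - |S|) <= eps t^2. Greedily merging
   components then gives a union of components with between t/3 and 2t/3 vertices, contradicting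
   this bound, unless some component has more than 2t/3 vertices; such a component misses at most
   3 eps t / 2 vertices. *)

theory Submission
  imports Defs "HOL-Analysis.Analysis" "HOL-Real_Asymp.Real_Asymp"
begin

unbundle no vec_syntax

section \<open>Quadratic forms of regular symmetric weights\<close>

definition quad_form :: "nat \<Rightarrow> (nat \<Rightarrow> nat \<Rightarrow> real) \<Rightarrow> (nat \<Rightarrow> real) \<Rightarrow> real" where
  "quad_form n a x = (\<Sum>i<n. \<Sum>j<n. a i j * x i * x j)"

definition norm_sq :: "nat \<Rightarrow> (nat \<Rightarrow> real) \<Rightarrow> real" where
  "norm_sq n x = (\<Sum>i<n. (x i)\<^sup>2)"

definition mat_apply :: "nat \<Rightarrow> (nat \<Rightarrow> nat \<Rightarrow> real) \<Rightarrow> (nat \<Rightarrow> real) \<Rightarrow> nat \<Rightarrow> real" where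
  "mat_apply n a x i = (\<Sum>j<n. a i j * x j)"

text \<open>The orthogonal complement of the all-ones vector in \<open>\<real>\<^sup>n\<close>, with vectors represented by
  functions vanishing outside \<open>{..<n}\<close>, so that its unit sphere is compact in the product
  topology.\<close>

definition centered :: "nat \<Rightarrow> (nat \<Rightarrow> real) set" where
  "centered n = {x. (\<forall>i. n \<le> i \<longrightarrow> x i = 0) \<and> (\<Sum>i<n. x i) = 0}"

definition centered_sphere :: "nat \<Rightarrow> (nat \<Rightarrow> real) set" where
  "centered_sphere n = {x \<in> centered n. norm_sq n x = 1}"

lemma quad_form_scale: "quad_form n a (\<lambda>i. c * x i) = c\<^sup>2 * quad_form n a x"
  unfolding quad_form_def by (simp add: sum_distrib_left power2_eq_square algebra_simps)

lemma norm_sq_scale: "norm_sq n (\<lambda>i. c * x i) = c\<^sup>2 * norm_sq n x"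
  unfolding norm_sq_def by (simp add: sum_distrib_left power_mult_distrib)

lemma norm_sq_nonneg: "0 \<le> norm_sq n x"
  unfolding norm_sq_def by (simp add: sum_nonneg)

lemma norm_sq_eq_0_iff: "norm_sq n x = 0 \<longleftrightarrow> (\<forall>i<n. x i = 0)"
  unfolding norm_sq_def by (auto simp: sum_nonneg_eq_0_iff)

lemma norm_sq_add:
  "norm_sq n (\<lambda>i. y i + e * r i) = norm_sq n y + 2 * e * (\<Sum>i<n. r i * y i) + e\<^sup>2 * norm_sq n r"
  unfolding norm_sq_def
  by (simp add: sum.distrib[symmetric] sum_distrib_left power2_eq_square algebra_simps)

lemma quad_form_eq_sum_mat_apply: "quad_form n a x = (\<Sum>i<n. x i * mat_apply n a x i)"
  unfolding quad_form_def mat_apply_def by (simp add: sum_distrib_left algebra_simps)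

lemma centered_scale: "x \<in> centered n \<Longrightarrow> (\<lambda>i. c * x i) \<in> centered n"
  unfolding centered_def by (simp add: sum_distrib_left[symmetric])

lemma centered_add: "x \<in> centered n \<Longrightarrow> y \<in> centered n \<Longrightarrow> (\<lambda>i. x i + y i) \<in> centered n"
  unfolding centered_def by (simp add: sum.distrib)

lemma compact_centered_sphere: "compact (centered_sphere n)"
proof -
  define K where "K = PiE UNIV (\<lambda>i::nat. if i < n then {-1..(1::real)} else {0})"
  have "compactin (product_topology (\<lambda>i. euclideanreal) UNIV) K"
    unfolding K_def compactin_PiE by auto
  hence "compact K" by (metis compactin_euclidean_iff euclidean_product_topology)
  moreover have "closed (centered_sphere n)"
  proof -
    have "centered_sphere n
        = (\<Inter>i\<in>{n..}. {x. x i = 0}) \<inter> {x. (\<Sum>i<n. x i) = 0} \<inter> {x. norm_sq n x = 1}"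
      by (auto simp: centered_sphere_def centered_def)
    then show ?thesis unfolding norm_sq_def
      by (simp only:) (intro closed_Int closed_INT ballI closed_Collect_eq continuous_intros
          continuous_on_product_coordinates)
  qed
  moreover have "centered_sphere n \<subseteq> K"
  proof
    fix x assume x: "x \<in> centered_sphere n"
    have "\<bar>x i\<bar> \<le> 1" if "i < n" for i
    proof -
      have "(x i)\<^sup>2 \<le> norm_sq n x" unfolding norm_sq_def
        by (rule member_le_sum) (use that in auto)
      with x show ?thesis by (simp add: centered_sphere_def abs_square_le_1)
    qed
    with x show "x \<in> K"
      by (auto simp: K_def centered_sphere_def centered_def PiE_def extensional_def abs_le_iff)
  qed
  ultimately show ?thesis by (metis compact_Int_closed inf.absorb_iff2)
qed

lemma scale_in_centered_sphere:
  "x \<in> centered n \<Longrightarrow> c\<^sup>2 * norm_sq n x = 1 \<Longrightarrow> (\<lambda>i. c * x i) \<in> centered_sphere n"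
  by (simp add: centered_sphere_def centered_scale norm_sq_scale)

lemma inverse_sqrt_norm_sq: "norm_sq n x \<noteq> 0 \<Longrightarrow> (1 / sqrt (norm_sq n x))\<^sup>2 * norm_sq n x = 1"
  using norm_sq_nonneg[of n x] by (simp add: power_divide)

lemma exists_rayleigh_maximiser:
  assumes "x \<in> centered n" "norm_sq n x \<noteq> 0"
  obtains y where "y \<in> centered_sphere n"
    and "\<And>z. z \<in> centered n \<Longrightarrow> quad_form n a z \<le> quad_form n a y * norm_sq n z"
proof -
  have "centered_sphere n \<noteq> {}"
    using scale_in_centered_sphere[OF assms(1) inverse_sqrt_norm_sq[OF assms(2)]] by blast
  moreover have "continuous_on (centered_sphere n) (quad_form n a)"
    unfolding quad_form_def
    by (intro continuous_intros continuous_on_subset[OF continuous_on_product_coordinates]) auto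
  ultimately obtain y where y: "y \<in> centered_sphere n"
    and max: "\<And>z. z \<in> centered_sphere n \<Longrightarrow> quad_form n a z \<le> quad_form n a y"
    using continuous_attains_sup[OF compact_centered_sphere] by blast
  have "quad_form n a z \<le> quad_form n a y * norm_sq n z" if z: "z \<in> centered n" for z
  proof (cases "norm_sq n z = 0")
    case True
    then have "quad_form n a z = 0" by (simp add: norm_sq_eq_0_iff quad_form_def)
    with True show ?thesis by simp
  next
    case False
    with norm_sq_nonneg[of n z] have pos: "0 < norm_sq n z" by simp
    have "quad_form n a (\<lambda>i. 1 / sqrt (norm_sq n z) * z i) = quad_form n a z / norm_sq n z"
      unfolding quad_form_scale using pos by (simp add: power_divide)
    with max[OF scale_in_centered_sphere[OF z inverse_sqrt_norm_sq[OF False]]]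
    have "quad_form n a z / norm_sq n z \<le> quad_form n a y" by (simp only:)
    with pos show ?thesis by (simp add: divide_le_eq mult.commute)
  qed
  with y show thesis by (rule that)
qed

locale regular_weights =
  fixes n :: nat and a :: "nat \<Rightarrow> nat \<Rightarrow> real" and d :: real
  assumes sym: "\<And>i j. i < n \<Longrightarrow> j < n \<Longrightarrow> a i j = a j i"
    and nonneg: "\<And>i j. 0 \<le> a i j"
    and row_sum: "\<And>i. i < n \<Longrightarrow> (\<Sum>j<n. a i j) = d"
begin

lemma col_sum: "j < n \<Longrightarrow> (\<Sum>i<n. a i j) = d"
  using row_sum[of j] sym by (metis (no_types, lifting) lessThan_iff sum.cong)

lemma sum_mat_apply: "(\<Sum>i<n. mat_apply n a y i) = d * (\<Sum>j<n. y j)"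
proof -
  have "(\<Sum>i<n. mat_apply n a y i) = (\<Sum>j<n. y j * (\<Sum>i<n. a i j))"
    unfolding mat_apply_def by (subst sum.swap) (simp add: sum_distrib_left mult.commute)
  also have "\<dots> = (\<Sum>j<n. y j * d)" using col_sum by simp
  finally show ?thesis by (simp add: sum_distrib_left mult.commute)
qed

lemma weighted_sum_squares: "(\<Sum>i<n. \<Sum>j<n. a i j * ((x i)\<^sup>2 + (x j)\<^sup>2)) = 2 * d * norm_sq n x"
proof -
  have "(\<Sum>i<n. \<Sum>j<n. a i j * (x i)\<^sup>2) = (\<Sum>i<n. (\<Sum>j<n. a i j) * (x i)\<^sup>2)"
    by (simp add: sum_distrib_right)
  also have "\<dots> = d * norm_sq n x" using row_sum by (simp add: norm_sq_def sum_distrib_left)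
  finally have rows: "(\<Sum>i<n. \<Sum>j<n. a i j * (x i)\<^sup>2) = d * norm_sq n x" .
  have "(\<Sum>i<n. \<Sum>j<n. a i j * (x j)\<^sup>2) = (\<Sum>j<n. (\<Sum>i<n. a i j) * (x j)\<^sup>2)"
    by (subst sum.swap) (simp add: sum_distrib_right)
  also have "\<dots> = d * norm_sq n x" using col_sum by (simp add: norm_sq_def sum_distrib_left)
  finally have "(\<Sum>i<n. \<Sum>j<n. a i j * (x j)\<^sup>2) = d * norm_sq n x" .
  with rows show ?thesis by (simp add: distrib_left sum.distrib)
qed

lemma weighted_sum_sq_diff:
  "(\<Sum>i<n. \<Sum>j<n. a i j * (x i - x j)\<^sup>2) = 2 * d * norm_sq n x - 2 * quad_form n a x"
proof -
  have "(\<Sum>i<n. \<Sum>j<n. a i j * (x i - x j)\<^sup>2)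
      = (\<Sum>i<n. \<Sum>j<n. a i j * ((x i)\<^sup>2 + (x j)\<^sup>2)) - 2 * quad_form n a x"
    unfolding quad_form_def
    by (simp add: sum_subtractf[symmetric] sum_distrib_left power2_diff algebra_simps)
  then show ?thesis using weighted_sum_squares by simp
qed

lemma weighted_sum_sq_add:
  "(\<Sum>i<n. \<Sum>j<n. a i j * (x i + x j)\<^sup>2) = 2 * d * norm_sq n x + 2 * quad_form n a x"
proof -
  have "(\<Sum>i<n. \<Sum>j<n. a i j * (x i + x j)\<^sup>2)
      = (\<Sum>i<n. \<Sum>j<n. a i j * ((x i)\<^sup>2 + (x j)\<^sup>2)) + 2 * quad_form n a x"
    unfolding quad_form_def
    by (simp add: sum.distrib[symmetric] sum_distrib_left power2_sum algebra_simps)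
  then show ?thesis using weighted_sum_squares by simp
qed

lemma quad_form_le: "quad_form n a x \<le> d * norm_sq n x"
proof -
  have "0 \<le> (\<Sum>i<n. \<Sum>j<n. a i j * (x i - x j)\<^sup>2)"
    by (intro sum_nonneg mult_nonneg_nonneg nonneg) auto
  then show ?thesis using weighted_sum_sq_diff by simp
qed

lemma quad_form_ge: "- (d * norm_sq n x) \<le> quad_form n a x"
proof -
  have "0 \<le> (\<Sum>i<n. \<Sum>j<n. a i j * (x i + x j)\<^sup>2)"
    by (intro sum_nonneg mult_nonneg_nonneg nonneg) auto
  then show ?thesis using weighted_sum_sq_add by simp
qed

lemma quad_form_add:
  "quad_form n a (\<lambda>i. y i + e * r i)
     = quad_form n a y + 2 * e * (\<Sum>i<n. r i * mat_apply n a y i) + e\<^sup>2 * quad_form n a r"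
proof -
  have "quad_form n a (\<lambda>i. y i + e * r i) = quad_form n a y
      + e * (\<Sum>i<n. \<Sum>j<n. a i j * r i * y j) + e * (\<Sum>j<n. \<Sum>i<n. a i j * y i * r j)
      + e\<^sup>2 * quad_form n a r"
    unfolding quad_form_def
    by (subst (2) sum.swap)
       (simp add: sum.distrib[symmetric] sum_distrib_left power2_eq_square algebra_simps)
  also have "(\<Sum>j<n. \<Sum>i<n. a i j * y i * r j) = (\<Sum>j<n. \<Sum>i<n. a j i * r j * y i)"
    by (intro sum.cong refl) (simp add: sym)
  finally show ?thesis unfolding mat_apply_def by (simp add: sum_distrib_left algebra_simps)
qed

text \<open>The residual \<open>r = A y - \<lambda> y\<close> is centered and orthogonal to \<open>y\<close>, and moving \<open>y\<close> a little in direction \<open>r\<close>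
  would increase the quotient unless \<open>r = 0\<close>.\<close>

lemma centered_maximiser_eigenvector:
  assumes d: "0 < d" and y: "y \<in> centered_sphere n"
    and max: "\<And>z. z \<in> centered n \<Longrightarrow> quad_form n a z \<le> quad_form n a y * norm_sq n z"
    and i: "i < n"
  shows "mat_apply n a y i = quad_form n a y * y i"
proof -
  define lam where "lam = quad_form n a y"
  define r where "r = (\<lambda>i. if i < n then mat_apply n a y i - lam * y i else 0)"
  define R where "R = norm_sq n r"
  have yc: "y \<in> centered n" and y1: "norm_sq n y = 1"
    using y by (auto simp: centered_sphere_def)
  have "(\<Sum>i<n. r i) = d * (\<Sum>i<n. y i) - lam * (\<Sum>i<n. y i)"
    by (simp add: r_def sum_subtractf sum_distrib_left sum_mat_apply)
  hence rc: "r \<in> centered n" using yc by (simp add: centered_def r_def)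
  have "(\<Sum>i<n. r i * y i) = (\<Sum>i<n. y i * mat_apply n a y i) - lam * norm_sq n y"
    by (simp add: r_def norm_sq_def sum_subtractf sum_distrib_left power2_eq_square algebra_simps)
  hence ry: "(\<Sum>i<n. r i * y i) = 0"
    using y1 by (simp add: quad_form_eq_sum_mat_apply lam_def)
  have "(\<Sum>i<n. r i * mat_apply n a y i) = (\<Sum>i<n. r i * r i + lam * (r i * y i))"
    by (intro sum.cong refl) (simp add: r_def algebra_simps)
  hence rAy: "(\<Sum>i<n. r i * mat_apply n a y i) = R"
    using ry by (simp add: sum.distrib sum_distrib_left[symmetric] R_def norm_sq_def power2_eq_square)
  define e where "e = 1 / (2 * d)"
  have "quad_form n a (\<lambda>i. y i + e * r i) \<le> lam * norm_sq n (\<lambda>i. y i + e * r i)"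
    using max centered_add[OF yc centered_scale[OF rc]] by (simp add: lam_def)
  hence "2 * e * R + e\<^sup>2 * quad_form n a r \<le> lam * (e\<^sup>2 * R)"
    using y1 ry rAy by (simp add: quad_form_add norm_sq_add lam_def R_def algebra_simps)
  moreover have "e\<^sup>2 * (- (d * R)) \<le> e\<^sup>2 * quad_form n a r"
    using mult_left_mono[OF quad_form_ge[of r], of "e\<^sup>2"] by (simp add: R_def)
  moreover have "lam * (e\<^sup>2 * R) \<le> d * (e\<^sup>2 * R)"
    using quad_form_le[of y] y1 norm_sq_nonneg[of n r] by (simp add: lam_def R_def mult_right_mono)
  ultimately have "2 * e * R \<le> 2 * d * e\<^sup>2 * R" by (simp add: algebra_simps)
  hence "R \<le> R / 2" using d by (simp add: e_def power2_eq_square field_simps)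
  hence "R = 0" using norm_sq_nonneg[of n r] by (simp add: R_def)
  hence "r i = 0" using i by (simp add: R_def norm_sq_eq_0_iff)
  thus ?thesis using i by (simp add: r_def lam_def)
qed

end

section \<open>Multiple eigenvalues and the characteristic polynomial\<close>

lemma mat_erase_mult_vec_vanishing:
  fixes A :: "'a::field mat"
  assumes A: "A \<in> carrier_mat n n" and ev: "eigenvector A w lam" and wi: "w $ i = 0"
  shows "mat_erase A i i *\<^sub>v w = A *\<^sub>v w"
proof (rule eq_vecI)
  fix j assume "j < dim_vec (A *\<^sub>v w)"
  hence j: "j < n" using A by simp
  have w: "w \<in> carrier_vec n" using ev A by (simp add: eigenvector_def)
  show "(mat_erase A i i *\<^sub>v w) $ j = (A *\<^sub>v w) $ j"
  proof (cases "j = i")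
    case True
    have "(A *\<^sub>v w) $ i = lam * w $ i"
      using ev w j True unfolding eigenvector_def by simp
    also have "\<dots> = 0" using wi by simp
    finally have "(A *\<^sub>v w) $ i = 0" .
    then show ?thesis using True j A w by (simp add: mat_erase_def scalar_prod_def)
  next
    case False
    have "(mat_erase A i i *\<^sub>v w) $ j = (\<Sum>k<n. (if k = i then 0 else A $$ (j, k)) * w $ k)"
      using j False A w by (simp add: mat_erase_def scalar_prod_def lessThan_atLeast0)
    also have "\<dots> = (\<Sum>k<n. A $$ (j, k) * w $ k)"
      using wi by (intro sum.cong) auto
    also have "\<dots> = (A *\<^sub>v w) $ j"
      using j A w by (simp add: scalar_prod_def lessThan_atLeast0)
    finally show ?thesis .
  qed
qed (use A in simp)

lemma eigenvalue_mat_erase: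
  fixes A :: "'a::field mat"
  assumes A: "A \<in> carrier_mat n n" and ev: "eigenvector A w lam" and wi: "w $ i = 0"
  shows "eigenvalue (mat_erase A i i) lam"
  using ev mat_erase_mult_vec_vanishing[OF A ev wi] A
  unfolding eigenvalue_def eigenvector_def by auto

lemma two_le_order_char_poly:
  fixes A :: "'a::field_char_0 mat"
  assumes A: "A \<in> carrier_mat n n" and lam: "lam \<noteq> 0" "eigenvalue A lam"
    and vanish: "\<And>i. i < n \<Longrightarrow> \<exists>w. eigenvector A w lam \<and> w $ i = 0"
  shows "2 \<le> order lam (char_poly A)"
proof -
  let ?p = "char_poly A"
  have "n > 0"
    using lam(2) A by (auto simp: eigenvalue_def eigenvector_def)
  hence p': "pderiv ?p \<noteq> 0"
    using degree_monic_char_poly[OF A] by (auto simp: pderiv_eq_0_iff)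
  have root: "poly ?p lam = 0"
    using lam(2) eigenvalue_root_char_poly[OF A] by simp
  have "poly (char_poly (mat_erase A i i)) lam = 0" if i: "i < n" for i
  proof -
    obtain w where "eigenvector A w lam" "w $ i = 0" using vanish[OF i] by blast
    hence "eigenvalue (mat_erase A i i) lam" by (rule eigenvalue_mat_erase[OF A])
    thus ?thesis using eigenvalue_root_char_poly[of "mat_erase A i i" n] A by simp
  qed
  hence "poly (monom 1 1 * pderiv ?p) lam = 0"
    unfolding pderiv_char_poly_mat_erase[OF A] poly_sum by simp
  hence "poly (pderiv ?p) lam = 0" using lam(1) by (simp add: poly_monom)
  hence "order lam (pderiv ?p) \<noteq> 0" using p' order_root by blast
  moreover have "?p \<noteq> 0" using degree_monic_char_poly[OF A] by auto
  ultimately show ?thesis using order_pderiv[OF _ root] by simp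
qed

lemma eigenvector_vanishing_at:
  fixes A :: "'a::field mat"
  assumes A: "A \<in> carrier_mat n n" and u: "eigenvector A u lam" and y: "eigenvector A y lam"
    and indep: "\<And>c. y \<noteq> c \<cdot>\<^sub>v u" and i: "i < n" "u $ i \<noteq> 0"
  shows "\<exists>w. eigenvector A w lam \<and> w $ i = 0"
proof (intro exI conjI)
  define w where "w = u $ i \<cdot>\<^sub>v y - y $ i \<cdot>\<^sub>v u"
  have uc: "u \<in> carrier_vec n" and yc: "y \<in> carrier_vec n"
    using u y A by (auto simp: eigenvector_def)
  have "A *\<^sub>v w = lam \<cdot>\<^sub>v w"
    using u y A uc yc unfolding w_def eigenvector_def
    by (simp add: mult_minus_distrib_mat_vec mult_mat_vec)
       (intro eq_vecI; simp add: algebra_simps)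
  moreover have "w \<noteq> 0\<^sub>v n"
  proof
    assume "w = 0\<^sub>v n"
    have "y $ j = y $ i / u $ i * u $ j" if "j < n" for j
    proof -
      have "w $ j = 0" using \<open>w = 0\<^sub>v n\<close> that by simp
      hence "u $ i * y $ j = y $ i * u $ j" using that uc yc by (simp add: w_def)
        thus ?thesis using i(2) by (simp add: field_simps)
    qed
    hence "y = (y $ i / u $ i) \<cdot>\<^sub>v u" using uc yc by (intro eq_vecI) auto
    with indep show False by blast
  qed
  ultimately show "eigenvector A w lam"
    using uc yc A by (simp add: eigenvector_def w_def)
  show "w $ i = 0" using uc yc i(1) unfolding w_def by simp
qed

section \<open>Spectral bounds for regular graphs\<close>

definition adj_weight :: "(nat \<Rightarrow> nat \<Rightarrow> bool) \<Rightarrow> nat \<Rightarrow> nat \<Rightarrow> real" where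
  "adj_weight E i j = (if E i j then 1 else 0)"

lemma regular_weights_adj_weight:
  assumes "simple_graph_on t E" "regular_on t E d"
  shows "regular_weights t (adj_weight E) (real d)"
proof
  show "adj_weight E i j = adj_weight E j i" if "i < t" "j < t" for i j
    using assms(1) that by (auto simp: adj_weight_def simple_graph_on_def)
  show "0 \<le> adj_weight E i j" for i j
    by (simp add: adj_weight_def)
  show "(\<Sum>j<t. adj_weight E i j) = real d" if "i < t" for i
  proof -
    have "(\<Sum>j<t. adj_weight E i j) = real (card {j \<in> {..<t}. E i j})"
      by (simp add: adj_weight_def sum.inter_filter[symmetric])
    also have "{j \<in> {..<t}. E i j} = {u. u < t \<and> E i u}" by auto
    finally show ?thesis using assms(2) that by (simp add: regular_on_def)
  qed
qed

lemma adj_mat_carrier: "adj_mat t E \<in> carrier_mat t t"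
  by (simp add: adj_mat_def)

lemma adj_mat_mult_vec:
  "i < t \<Longrightarrow> (adj_mat t E *\<^sub>v Matrix.vec t y) $ i = mat_apply t (adj_weight E) y i"
  by (simp add: adj_mat_def mat_apply_def adj_weight_def scalar_prod_def lessThan_atLeast0)

lemma adj_mat_eigenvector:
  assumes "\<And>i. i < t \<Longrightarrow> mat_apply t (adj_weight E) y i = lam * y i" and "i < t" "y i \<noteq> 0"
  shows "eigenvector (adj_mat t E) (Matrix.vec t y) lam"
proof -
  have "Matrix.vec t y \<noteq> 0\<^sub>v t" using assms(2,3) by (metis index_vec index_zero_vec(1))
  moreover have "adj_mat t E *\<^sub>v Matrix.vec t y = lam \<cdot>\<^sub>v Matrix.vec t y"
    using adj_mat_carrier[of t E] assms(1)
    by (intro eq_vecI) (auto simp del: index_mult_mat_vec simp: adj_mat_mult_vec)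
  ultimately show ?thesis using adj_mat_carrier[of t E] by (simp add: eigenvector_def)
qed

lemma adj_mat_ones_eigenvector:
  assumes "simple_graph_on t E" "regular_on t E d" "0 < t"
  shows "eigenvector (adj_mat t E) (Matrix.vec t (\<lambda>_. 1)) (real d)"
proof -
  interpret regular_weights t "adj_weight E" "real d"
    using assms(1,2) by (rule regular_weights_adj_weight)
  show ?thesis
    by (rule adj_mat_eigenvector[OF _ assms(3)]) (simp_all add: mat_apply_def row_sum)
qed

lemma regular_centered_eigenvalue_multiple_root:
  assumes G: "simple_graph_on t E" "regular_on t E d" "0 < d"
    and y: "y \<in> centered t" "i < t" "y i \<noteq> 0"
    and eig: "\<And>j. j < t \<Longrightarrow> mat_apply t (adj_weight E) y j = real d * y j"
  shows "2 \<le> order (real d) (char_poly (adj_mat t E))"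
proof (rule two_le_order_char_poly)
  let ?A = "adj_mat t E" and ?u = "Matrix.vec t (\<lambda>_. 1::real)"
  show A: "?A \<in> carrier_mat t t" by (rule adj_mat_carrier)
  have tpos: "0 < t" using y(2) by simp
  have Y: "eigenvector ?A (Matrix.vec t y) (real d)" by (rule adj_mat_eigenvector[OF eig y(2,3)])
  then show "eigenvalue ?A (real d)" by (auto simp: eigenvalue_def)
  show "real d \<noteq> 0" using G(3) by simp
  have indep: "Matrix.vec t y \<noteq> c \<cdot>\<^sub>v ?u" for c
  proof
    assume eq: "Matrix.vec t y = c \<cdot>\<^sub>v ?u"
    have const: "y j = c" if "j < t" for j
      using arg_cong[OF eq, of "\<lambda>v. v $ j"] that by simp
    hence "real t * c = 0" using y(1) by (simp add: centered_def)
    with tpos const[OF y(2)] y(3) show False by simp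
  qed
  show "\<exists>w. eigenvector ?A w (real d) \<and> w $ j = 0" if "j < t" for j
    by (rule eigenvector_vanishing_at[OF A adj_mat_ones_eigenvector[OF G(1,2) tpos] Y indep])
       (use that in simp_all)
qed

lemma quad_form_adj_le_nontrivial_bound:
  assumes G: "simple_graph_on t E" "regular_on t E d" "0 < d"
    and B: "nontrivial_eigs_bounded (adj_mat t E) B"
    and z: "z \<in> centered t"
  shows "quad_form t (adj_weight E) z \<le> B * norm_sq t z"
proof (cases "norm_sq t z = 0")
  case True
  then have "quad_form t (adj_weight E) z = 0" by (simp add: norm_sq_eq_0_iff quad_form_def)
  with True show ?thesis by simp
next
  case False
  interpret regular_weights t "adj_weight E" "real d"
    using G(1,2) by (rule regular_weights_adj_weight)
  obtain y where y: "y \<in> centered_sphere t"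
    and max: "\<And>w. w \<in> centered t \<Longrightarrow>
                 quad_form t (adj_weight E) w \<le> quad_form t (adj_weight E) y * norm_sq t w"
    using exists_rayleigh_maximiser[OF z False] by blast
  define lam where "lam = quad_form t (adj_weight E) y"
  have yc: "y \<in> centered t" and "norm_sq t y = 1" using y by (auto simp: centered_sphere_def)
  then obtain i where i: "i < t" "y i \<noteq> 0" using norm_sq_eq_0_iff[of t y] by auto
  have eig: "\<And>j. j < t \<Longrightarrow> mat_apply t (adj_weight E) y j = lam * y j"
    using centered_maximiser_eigenvector[OF _ y max] G(3) by (simp add: lam_def)
  have ev: "eigenvalue (adj_mat t E) lam"
    using adj_mat_eigenvector[OF eig i] by (auto simp: eigenvalue_def)
  have "lam \<le> B"
  proof -
    from B[unfolded nontrivial_eigs_bounded_def, rule_format, OF ev]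
    consider "\<bar>lam\<bar> \<le> B"
      | "\<forall>\<nu>. eigenvalue (adj_mat t E) \<nu> \<longrightarrow> \<nu> \<le> lam" "order lam (char_poly (adj_mat t E)) = 1"
      by blast
    then show ?thesis
    proof cases
      case 2
      have "eigenvalue (adj_mat t E) (real d)"
        using adj_mat_ones_eigenvector[OF G(1,2)] i(1) unfolding eigenvalue_def by blast
      with 2(1) have "real d \<le> lam" by blast
      moreover have "lam \<le> real d"
        using quad_form_le[of y] \<open>norm_sq t y = 1\<close> by (simp add: lam_def)
      ultimately have "lam = real d" by simp
      have "2 \<le> order lam (char_poly (adj_mat t E))"
        unfolding \<open>lam = real d\<close>
        by (rule regular_centered_eigenvalue_multiple_root[OF G yc i]) (use eig \<open>lam = real d\<close> in simp)
      with 2(2) show ?thesis by simp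
    qed simp
  qed
  have "quad_form t (adj_weight E) z \<le> lam * norm_sq t z" using max[OF z] by (simp add: lam_def)
  also have "\<dots> \<le> B * norm_sq t z" by (rule mult_right_mono[OF \<open>lam \<le> B\<close> norm_sq_nonneg])
  finally show ?thesis .
qed

definition arcs_on :: "nat \<Rightarrow> (nat \<Rightarrow> nat \<Rightarrow> bool) \<Rightarrow> (nat \<times> nat) set" where
  "arcs_on t E = {(u, v). u < t \<and> v < t \<and> E u v}"

definition cut_arcs :: "nat \<Rightarrow> (nat \<Rightarrow> nat \<Rightarrow> bool) \<Rightarrow> nat set \<Rightarrow> (nat \<times> nat) set" where
  "cut_arcs t E S = {(u, v) \<in> arcs_on t E. u \<in> S \<longleftrightarrow> v \<notin> S}"

lemma finite_arcs_on: "finite (arcs_on t E)"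
  by (rule finite_subset[of _ "{..<t} \<times> {..<t}"]) (auto simp: arcs_on_def)

lemma card_arcs_on_regular:
  assumes "regular_on t E d"
  shows "card (arcs_on t E) = t * d"
proof -
  have "arcs_on t E = Sigma {..<t} (\<lambda>u. {v. v < t \<and> E u v})" by (auto simp: arcs_on_def)
  then have "card (arcs_on t E) = (\<Sum>u<t. card {v. v < t \<and> E u v})" by simp
  also have "\<dots> = t * d" using assms by (simp add: regular_on_def)
  finally show ?thesis .
qed

lemma card_arcs_on_simple:
  assumes G: "simple_graph_on t E"
  shows "card (arcs_on t E) = 2 * num_edges t E"
proof -
  define P where "P = {(u, v). u < v \<and> v < t \<and> E u v}"
  have fin: "finite P" by (rule finite_subset[OF _ finite_arcs_on[of t E]]) (auto simp: P_def arcs_on_def)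
  have "arcs_on t E = P \<union> prod.swap ` P"
  proof (intro equalityI subsetI)
    fix p assume "p \<in> arcs_on t E"
    then obtain u v where p: "p = (u, v)" "u < t" "v < t" "E u v" by (auto simp: arcs_on_def)
    show "p \<in> P \<union> prod.swap ` P"
    proof (cases "u < v")
      case True
      with p show ?thesis by (simp add: P_def)
    next
      case False
      have "u \<noteq> v" using G p by (auto simp: simple_graph_on_def)
      with False have "v < u" by simp
      moreover have "E v u" using G p by (simp add: simple_graph_on_def)
      ultimately have "(v, u) \<in> P" using p by (simp add: P_def)
      then show ?thesis using p by (auto intro: rev_image_eqI)
    qed
  next
    fix p assume "p \<in> P \<union> prod.swap ` P"
    then show "p \<in> arcs_on t E" using G by (auto simp: P_def arcs_on_def simple_graph_on_def)
  qed
  moreover have "P \<inter> prod.swap ` P = {}" by (auto simp: P_def)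
  moreover have "card (prod.swap ` P) = card P" by (simp add: card_image)
  ultimately show ?thesis using fin by (simp add: card_Un_disjoint num_edges_def P_def)
qed

lemma double_sum_if_eq_card:
  fixes t :: nat
  shows "(\<Sum>i<t. \<Sum>j<t. if P i j then c else 0) = c * real (card {(i, j). i < t \<and> j < t \<and> P i j})"
proof -
  have "(\<Sum>i<t. \<Sum>j<t. if P i j then c else 0) = (\<Sum>p\<in>{..<t} \<times> {..<t}. if P (fst p) (snd p) then c else 0)"
    by (simp add: sum.cartesian_product case_prod_beta)
  also have "\<dots> = (\<Sum>p\<in>{p \<in> {..<t} \<times> {..<t}. P (fst p) (snd p)}. c)"
    by (rule sum.inter_filter[symmetric]) (simp add: finite_cartesian_product)
  also have "{p \<in> {..<t} \<times> {..<t}. P (fst p) (snd p)} = {(i, j). i < t \<and> j < t \<and> P i j}" by auto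
  finally show ?thesis by simp
qed

text \<open>Up to the factor \<open>t\<close>, the projection of the indicator of \<open>S\<close> onto the complement of
  the all-ones vector.\<close>

definition balanced_indicator :: "nat \<Rightarrow> nat set \<Rightarrow> nat \<Rightarrow> real" where
  "balanced_indicator t S i = (if i < t then (if i \<in> S then real t else 0) - real (card S) else 0)"

lemma balanced_indicator_centered:
  assumes S: "S \<subseteq> {..<t}"
  shows "balanced_indicator t S \<in> centered t"
    and "norm_sq t (balanced_indicator t S) = real (card S) * (real t - real (card S)) * real t"
proof -
  let ?x = "balanced_indicator t S" and ?s = "real (card S)"
  have fin: "finite S" using S finite_subset by blast
  have "card ({..<t} - S) = t - card S" using S by (simp add: card_Diff_subset fin)
  moreover have "card S \<le> t" using S card_mono[of "{..<t}" S] by simp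
  ultimately have card_compl: "real (card ({..<t} - S)) = real t - ?s" by simp
  have split: "(\<Sum>i<t. f i) = (\<Sum>i\<in>{..<t} - S. f i) + (\<Sum>i\<in>S. f i)" for f :: "nat \<Rightarrow> real"
    using sum.subset_diff[OF S] by simp
  have in_S: "?x i = real t - ?s" if "i \<in> S" for i
    using S that by (auto simp: balanced_indicator_def)
  have off_S: "?x i = - ?s" if "i \<in> {..<t} - S" for i
    using that by (auto simp: balanced_indicator_def)
  have "(\<Sum>i<t. ?x i) = (real t - ?s) * - ?s + ?s * (real t - ?s)"
    using split[of ?x] in_S off_S card_compl by simp
  then show "?x \<in> centered t" by (simp add: centered_def balanced_indicator_def)
  have "norm_sq t ?x = (real t - ?s) * ?s\<^sup>2 + ?s * (real t - ?s)\<^sup>2"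
    using split[of "\<lambda>i. (?x i)\<^sup>2"] in_S off_S card_compl unfolding norm_sq_def by simp
  then show "norm_sq t ?x = ?s * (real t - ?s) * real t" by (simp add: power2_eq_square algebra_simps)
qed

lemma weighted_sum_sq_diff_balanced_indicator:
  "(\<Sum>i<t. \<Sum>j<t. adj_weight E i j * (balanced_indicator t S i - balanced_indicator t S j)\<^sup>2)
     = (real t)\<^sup>2 * real (card (cut_arcs t E S))"
proof -
  have "(\<Sum>i<t. \<Sum>j<t. adj_weight E i j * (balanced_indicator t S i - balanced_indicator t S j)\<^sup>2)
      = (\<Sum>i<t. \<Sum>j<t. if E i j \<and> (i \<in> S \<longleftrightarrow> j \<notin> S) then (real t)\<^sup>2 else 0)"
    by (intro sum.cong refl) (auto simp: adj_weight_def balanced_indicator_def)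
  also have "\<dots> = (real t)\<^sup>2 * real (card {(i, j). i < t \<and> j < t \<and> E i j \<and> (i \<in> S \<longleftrightarrow> j \<notin> S)})"
    by (rule double_sum_if_eq_card)
  also have "{(i, j). i < t \<and> j < t \<and> E i j \<and> (i \<in> S \<longleftrightarrow> j \<notin> S)} = cut_arcs t E S"
    by (auto simp: cut_arcs_def arcs_on_def)
  finally show ?thesis .
qed

lemma spectral_cut_bound:
  assumes G: "simple_graph_on t E" "regular_on t E d" "0 < d"
    and B: "nontrivial_eigs_bounded (adj_mat t E) B"
    and S: "S \<subseteq> {..<t}"
  shows "2 * (real d - B) * real (card S) * (real t - real (card S))
           \<le> real t * real (card (cut_arcs t E S))"
proof -
  interpret regular_weights t "adj_weight E" "real d"
    using G(1,2) by (rule regular_weights_adj_weight)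
  let ?x = "balanced_indicator t S"
  have "2 * (real d - B) * norm_sq t ?x = 2 * real d * norm_sq t ?x - 2 * (B * norm_sq t ?x)"
    by (simp add: algebra_simps)
  also have "\<dots> \<le> 2 * real d * norm_sq t ?x - 2 * quad_form t (adj_weight E) ?x"
    using quad_form_adj_le_nontrivial_bound[OF G B balanced_indicator_centered(1)[OF S]] by simp
  also have "\<dots> = (real t)\<^sup>2 * real (card (cut_arcs t E S))"
    using weighted_sum_sq_diff[of ?x] weighted_sum_sq_diff_balanced_indicator by simp
  finally have "real t * (2 * (real d - B) * real (card S) * (real t - real (card S)))
      \<le> real t * (real t * real (card (cut_arcs t E S)))"
    unfolding balanced_indicator_centered(2)[OF S] by (simp add: power2_eq_square mult_ac)
  then show ?thesis
    using S by (cases "t = 0") (auto simp: mult_le_cancel_left_pos)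
qed

definition edge_closed :: "nat \<Rightarrow> (nat \<Rightarrow> nat \<Rightarrow> bool) \<Rightarrow> nat set \<Rightarrow> bool" where
  "edge_closed t E S \<longleftrightarrow> S \<subseteq> {..<t} \<and> (\<forall>u\<in>S. \<forall>v<t. E u v \<longrightarrow> v \<in> S)"

lemma cut_arcs_subset_deleted:
  assumes sub: "subgraph_on t E' E" and S: "edge_closed t E' S"
  shows "cut_arcs t E S \<subseteq> arcs_on t E - arcs_on t E'"
proof
  fix p assume "p \<in> cut_arcs t E S"
  then obtain u v where p: "p = (u, v)" "u < t" "v < t" "E u v" and uv: "u \<in> S \<longleftrightarrow> v \<notin> S"
    by (auto simp: cut_arcs_def arcs_on_def)
  have "\<not> E' u v"
  proof
    assume "E' u v"
    moreover have "E' v u" using sub p(2,3) \<open>E' u v\<close> by (auto simp: subgraph_on_def simple_graph_on_def)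
    ultimately show False using S p(2,3) uv by (auto simp: edge_closed_def)
  qed
  with p show "p \<in> arcs_on t E - arcs_on t E'" by (auto simp: arcs_on_def)
qed

lemma card_cut_arcs_le_deleted:
  assumes G: "simple_graph_on t E" and sub: "subgraph_on t E' E" and S: "edge_closed t E' S"
  shows "real (card (cut_arcs t E S)) \<le> 2 * (real (num_edges t E) - real (num_edges t E'))"
proof -
  have G': "simple_graph_on t E'" using sub by (simp add: subgraph_on_def)
  have arcs: "arcs_on t E' \<subseteq> arcs_on t E" using sub by (auto simp: arcs_on_def subgraph_on_def)
  have "card (cut_arcs t E S) \<le> card (arcs_on t E - arcs_on t E')"
    by (intro card_mono cut_arcs_subset_deleted[OF sub S]) (simp add: finite_arcs_on)
  also have "\<dots> = card (arcs_on t E) - card (arcs_on t E')"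
    using arcs by (simp add: card_Diff_subset finite_subset[OF _ finite_arcs_on])
  finally have "card (cut_arcs t E S) \<le> 2 * num_edges t E - 2 * num_edges t E'"
    unfolding card_arcs_on_simple[OF G] card_arcs_on_simple[OF G'] .
  moreover have "2 * num_edges t E' \<le> 2 * num_edges t E"
    using card_mono[OF finite_arcs_on arcs]
    unfolding card_arcs_on_simple[OF G] card_arcs_on_simple[OF G'] .
  ultimately have "card (cut_arcs t E S) + 2 * num_edges t E' \<le> 2 * num_edges t E" by linarith
  then have "real (card (cut_arcs t E S) + 2 * num_edges t E') \<le> real (2 * num_edges t E)"
    by (rule of_nat_mono)
  then show ?thesis by simp
qed

section \<open>Components of subgraphs\<close>

lemma reach_on_sym:
  assumes "simple_graph_on t E" "reach_on t E u v"
  shows "reach_on t E v u"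
proof -
  have "symp (\<lambda>u v. u < t \<and> v < t \<and> E u v)"
    using assms(1) by (auto simp: symp_def simple_graph_on_def)
  then have "symp (reach_on t E)" unfolding reach_on_def by (rule symp_rtranclp)
  with assms(2) show ?thesis by (blast dest: sympD)
qed

lemma edge_closed_reach_on:
  assumes "edge_closed t E S" "u \<in> S" "reach_on t E u v"
  shows "v \<in> S"
  using assms(3,2) unfolding reach_on_def
  by (induction rule: rtranclp_induct) (use assms(1) in \<open>auto simp: edge_closed_def\<close>)

lemma edge_closed_component_on: "edge_closed t E (component_on t E v)"
  unfolding edge_closed_def component_on_def reach_on_def
  by (auto intro: rtranclp.rtrancl_into_rtrancl)

lemma component_on_self: "v < t \<Longrightarrow> v \<in> component_on t E v"
  by (simp add: component_on_def reach_on_def)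

lemma component_on_disjoint:
  assumes "simple_graph_on t E" "edge_closed t E S" "v \<notin> S"
  shows "component_on t E v \<inter> S = {}"
  using assms reach_on_sym edge_closed_reach_on by (fastforce simp: component_on_def)

lemma edge_closed_Un: "edge_closed t E A \<Longrightarrow> edge_closed t E B \<Longrightarrow> edge_closed t E (A \<union> B)"
  by (auto simp: edge_closed_def)

lemma finite_edge_closed: "edge_closed t E S \<Longrightarrow> finite S"
  unfolding edge_closed_def using finite_subset by blast

lemma card_edge_closed_le: "edge_closed t E S \<Longrightarrow> card S \<le> t"
  unfolding edge_closed_def using card_mono[of "{..<t}" S] by auto

text \<open>If all components are small, a largest union of components with at most \<open>2t/3\<close> vertices,
  or one further component, has between \<open>t/3\<close> and \<open>2t/3\<close> vertices.\<close>

lemma exists_edge_closed_middle: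
  assumes G: "simple_graph_on t E"
    and small: "\<And>v. v < t \<Longrightarrow> real (card (component_on t E v)) \<le> 2 * real t / 3"
  shows "\<exists>S. edge_closed t E S \<and> real t / 3 \<le> real (card S) \<and> real (card S) \<le> 2 * real t / 3"
proof -
  let ?P = "\<lambda>S. edge_closed t E S \<and> real (card S) \<le> 2 * real t / 3"
  have "\<exists>S. ?P S \<and> (\<forall>S'. ?P S' \<longrightarrow> card S' \<le> card S)"
  proof (rule Lattices_Big.ex_has_greatest_nat[of ?P "{}" card "Suc t"])
    show "?P {}" by (simp add: edge_closed_def)
    show "\<forall>S. ?P S \<longrightarrow> card S < Suc t" using card_edge_closed_le by (simp add: less_Suc_eq_le)
  qed
  then obtain S where S: "edge_closed t E S" "real (card S) \<le> 2 * real t / 3"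
    and Smax: "\<And>S'. ?P S' \<Longrightarrow> card S' \<le> card S"
    by blast
  show ?thesis
  proof (cases "real t / 3 \<le> real (card S)")
    case True
    with S show ?thesis by blast
  next
    case False
    then have "S \<noteq> {..<t}" by auto
    then obtain v where v: "v < t" "v \<notin> S" using S(1) by (auto simp: edge_closed_def)
    define C where "C = component_on t E v"
    have C: "edge_closed t E C" by (simp add: C_def edge_closed_component_on)
    have "S \<inter> C = {}" using component_on_disjoint[OF G S(1) v(2)] by (auto simp: C_def)
    then have card_Un: "card (S \<union> C) = card S + card C"
      by (rule card_Un_disjoint[OF finite_edge_closed[OF S(1)] finite_edge_closed[OF C]])
    moreover have "0 < card C"
      using component_on_self[OF v(1)] finite_edge_closed[OF C] by (auto simp: C_def card_gt_0_iff)
    ultimately have "\<not> ?P (S \<union> C)" using Smax[of "S \<union> C"] by linarith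
    then have "2 * real t / 3 < real (card S) + real (card C)"
      using edge_closed_Un[OF S(1) C] card_Un by simp
    then have "real t / 3 \<le> real (card C)" using False by simp
    moreover have "real (card C) \<le> 2 * real t / 3" using small[OF v(1)] by (simp add: C_def)
    ultimately show ?thesis using C by blast
  qed
qed

lemma large_component_if_cuts_small:
  assumes G: "simple_graph_on t E" and "0 < t" and eta: "\<eta> < 2 / 9"
    and cuts: "\<And>S. edge_closed t E S \<Longrightarrow> real (card S) * (real t - real (card S)) \<le> \<eta> * (real t)\<^sup>2"
  shows "\<exists>v<t. (1 - 3 / 2 * \<eta>) * real t \<le> real (card (component_on t E v))"
proof (cases "\<exists>v<t. 2 * real t / 3 < real (card (component_on t E v))")
  case True
  then obtain v where v: "v < t" and big: "2 * real t / 3 < real (card (component_on t E v))"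
    by blast
  let ?s = "real (card (component_on t E v))"
  have "?s \<le> real t" using card_edge_closed_le[OF edge_closed_component_on] by simp
  then have "2 * real t / 3 * (real t - ?s) \<le> ?s * (real t - ?s)"
    using big by (intro mult_right_mono) auto
  also have "\<dots> \<le> \<eta> * (real t)\<^sup>2" by (rule cuts[OF edge_closed_component_on])
  finally have "real t * (2 / 3 * (real t - ?s)) \<le> real t * (\<eta> * real t)"
    by (simp add: power2_eq_square algebra_simps)
  then have "2 / 3 * (real t - ?s) \<le> \<eta> * real t"
    by (rule mult_left_le_imp_le) (use \<open>0 < t\<close> in simp)
  then have "(1 - 3 / 2 * \<eta>) * real t \<le> ?s" by (simp add: algebra_simps)
  with v show ?thesis by blast
next
  case False
  then have "real (card (component_on t E v)) \<le> 2 * real t / 3" if "v < t" for v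
    using that not_less by blast
  then obtain S where S: "edge_closed t E S" "real t / 3 \<le> real (card S)" "real (card S) \<le> 2 * real t / 3"
    using exists_edge_closed_middle[OF G] by blast
  have "0 \<le> (real (card S) - real t / 3) * (2 * real t / 3 - real (card S))"
    using S(2,3) by (intro mult_nonneg_nonneg) auto
  also have "\<dots> = real (card S) * (real t - real (card S)) - 2 / 9 * (real t)\<^sup>2"
    by (simp add: power2_eq_square field_simps)
  finally have "2 / 9 * (real t)\<^sup>2 \<le> real (card S) * (real t - real (card S))"
    by simp
  also have "\<dots> \<le> \<eta> * (real t)\<^sup>2" by (rule cuts[OF S(1)])
  finally have "2 / 9 * (real t)\<^sup>2 \<le> \<eta> * (real t)\<^sup>2" .
  with eta \<open>0 < t\<close> show ?thesis by simp
qed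

lemma large_component_of_dense_subgraph:
  assumes H: "simple_graph_on t H" "regular_on t H d" "0 < d"
    and eigs: "nontrivial_eigs_bounded (adj_mat t H) (real d / 2)"
    and sub: "subgraph_on t H' H"
    and dense: "(1 - \<eta>) * real (num_edges t H) \<le> real (num_edges t H')"
    and "0 < t" "\<eta> < 2 / 9"
  shows "\<exists>v<t. (1 - 3 / 2 * \<eta>) * real t \<le> real (card (component_on t H' v))"
proof (rule large_component_if_cuts_small)
  show "simple_graph_on t H'" using sub by (simp add: subgraph_on_def)
  fix S assume S: "edge_closed t H' S"
  have edges: "2 * real (num_edges t H) = real t * real d"
    using card_arcs_on_simple[OF H(1)] card_arcs_on_regular[OF H(2)] by (metis of_nat_mult of_nat_numeral)
  have "real d * (real (card S) * (real t - real (card S)))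
      \<le> real t * real (card (cut_arcs t H S))"
    using spectral_cut_bound[OF H eigs] S by (simp add: edge_closed_def algebra_simps)
  also have "\<dots> \<le> real t * (2 * (real (num_edges t H) - real (num_edges t H')))"
    using card_cut_arcs_le_deleted[OF H(1) sub S] by (simp add: mult_left_mono)
  also have "\<dots> \<le> real t * (\<eta> * (real t * real d))"
  proof (rule mult_left_mono)
    have "2 * (real (num_edges t H) - real (num_edges t H')) \<le> \<eta> * (2 * real (num_edges t H))"
      using dense by (simp add: algebra_simps)
    then show "2 * (real (num_edges t H) - real (num_edges t H')) \<le> \<eta> * (real t * real d)"
      by (simp only: edges)
  qed simp
  finally have "real d * (real (card S) * (real t - real (card S))) \<le> real d * (\<eta> * (real t)\<^sup>2)"
    by (simp add: power2_eq_square mult_ac)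
  then show "real (card S) * (real t - real (card S)) \<le> \<eta> * (real t)\<^sup>2"
    by (rule mult_left_le_imp_le) (use H(3) in simp)
qed (use assms in auto)

lemma nontrivial_eigs_bounded_mono:
  "nontrivial_eigs_bounded A B \<Longrightarrow> B \<le> B' \<Longrightarrow> nontrivial_eigs_bounded A B'"
  unfolding nontrivial_eigs_bounded_def by fastforce

lemma eventually_half_degree_bound:
  fixes d :: "nat \<Rightarrow> nat" and A :: "nat \<Rightarrow> real mat"
  assumes "0 < c"
    and d_lower: "\<forall>t\<in>T. N1 \<le> t \<longrightarrow> c * real t powr (2/3) \<le> real (d t)"
    and eigs: "\<forall>t\<in>T. N2 \<le> t \<longrightarrow> nontrivial_eigs_bounded (A t) (C * real t powr (1/3))"
  obtains N where "\<forall>t\<in>T. N \<le> t \<longrightarrow> 0 < d t \<and> nontrivial_eigs_bounded (A t) (real (d t) / 2)"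
proof -
  have "eventually (\<lambda>t. 0 < c * real t powr (2/3) \<and> 2 * (C * real t powr (1/3)) \<le> c * real t powr (2/3))
          sequentially"
    using \<open>0 < c\<close> by (intro eventually_conj; real_asymp)
  then obtain N3 where gap: "\<forall>t\<ge>N3. 0 < c * real t powr (2/3) \<and>
                          2 * (C * real t powr (1/3)) \<le> c * real t powr (2/3)"
    by (auto simp: eventually_sequentially)
  have "0 < d t \<and> nontrivial_eigs_bounded (A t) (real (d t) / 2)" if t: "t \<in> T" "Max {N1, N2, N3} \<le> t" for t
  proof
    have "0 < c * real t powr (2/3)" "2 * (C * real t powr (1/3)) \<le> c * real t powr (2/3)"
      using gap t(2) by auto
    moreover have "c * real t powr (2/3) \<le> real (d t)" using d_lower t by auto
    ultimately have "0 < d t" and half: "C * real t powr (1/3) \<le> real (d t) / 2" by auto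
    then show "0 < d t" by simp
    show "nontrivial_eigs_bounded (A t) (real (d t) / 2)"
      using eigs t half nontrivial_eigs_bounded_mono by auto
  qed
  then show thesis by (intro that[of "Max {N1, N2, N3}"]) blast
qed

theorem corollary4p10:
  fixes T :: "nat set"
    and H :: "nat \<Rightarrow> nat \<Rightarrow> nat \<Rightarrow> bool"
    and d :: "nat \<Rightarrow> nat"
  assumes T_pos: "\<forall>t\<in>T. t > 0"
    and T_inf: "infinite T"
    and H_graph: "\<forall>t\<in>T. simple_graph_on t (H t)"
    and H_tf: "\<forall>t\<in>T. triangle_free_on t (H t)"
    and H_reg: "\<forall>t\<in>T. regular_on t (H t) (d t)"
    and d_Theta: "\<exists>c1>0. \<exists>c2>0. \<exists>N. \<forall>t\<in>T. t \<ge> N \<longrightarrow>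
                    c1 * real t powr (2/3) \<le> real (d t) \<and> real (d t) \<le> c2 * real t powr (2/3)"
    and H_eigs: "\<exists>C>0. \<exists>N. \<forall>t\<in>T. t \<ge> N \<longrightarrow>
                    nontrivial_eigs_bounded (adj_mat t (H t)) (C * real t powr (1/3))"
  shows "\<forall>H' :: nat \<Rightarrow> nat \<Rightarrow> nat \<Rightarrow> bool.
           (\<forall>t\<in>T. subgraph_on t (H' t) (H t)) \<longrightarrow>
           (\<forall>\<epsilon>>0. \<exists>N. \<forall>t\<in>T. t \<ge> N \<longrightarrow>
                real (num_edges t (H' t)) \<ge> (1 - \<epsilon>) * real (num_edges t (H t))) \<longrightarrow>
           (\<forall>\<epsilon>>0. \<exists>N. \<forall>t\<in>T. t \<ge> N \<longrightarrow>
                (\<exists>v<t. real (card (component_on t (H' t) v)) \<ge> (1 - \<epsilon>) * real t))"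
proof (intro allI impI)
  fix H' :: "nat \<Rightarrow> nat \<Rightarrow> nat \<Rightarrow> bool" and \<delta> :: real
  assume sub: "\<forall>t\<in>T. subgraph_on t (H' t) (H t)"
    and dense: "\<forall>\<epsilon>>0. \<exists>N. \<forall>t\<in>T. t \<ge> N \<longrightarrow>
                  real (num_edges t (H' t)) \<ge> (1 - \<epsilon>) * real (num_edges t (H t))"
    and "\<delta> > 0"
  obtain c N1 C N2 where "0 < c" and "\<forall>t\<in>T. N1 \<le> t \<longrightarrow> c * real t powr (2/3) \<le> real (d t)"
    and "\<forall>t\<in>T. N2 \<le> t \<longrightarrow> nontrivial_eigs_bounded (adj_mat t (H t)) (C * real t powr (1/3))"
    using d_Theta H_eigs by blast
  then obtain N3 where gap:
    "\<forall>t\<in>T. N3 \<le> t \<longrightarrow> 0 < d t \<and> nontrivial_eigs_bounded (adj_mat t (H t)) (real (d t) / 2)"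
    by (rule eventually_half_degree_bound)
  define \<eta> where "\<eta> = min (1/10) (2/3 * \<delta>)"
  have "0 < \<eta>" "\<eta> < 2 / 9" "1 - \<delta> \<le> 1 - 3 / 2 * \<eta>" using \<open>\<delta> > 0\<close> by (auto simp: \<eta>_def)
  then obtain N4 where N4: "\<forall>t\<in>T. N4 \<le> t \<longrightarrow> (1 - \<eta>) * real (num_edges t (H t)) \<le> real (num_edges t (H' t))"
    using dense by blast
  show "\<exists>N. \<forall>t\<in>T. t \<ge> N \<longrightarrow> (\<exists>v<t. real (card (component_on t (H' t) v)) \<ge> (1 - \<delta>) * real t)"
  proof (rule exI[of _ "max N3 N4"], intro ballI impI)
    fix t assume t: "t \<in> T" "max N3 N4 \<le> t"
    have "\<exists>v<t. (1 - 3 / 2 * \<eta>) * real t \<le> real (card (component_on t (H' t) v))"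
      by (rule large_component_of_dense_subgraph[of t "H t" "d t" "H' t" \<eta>])
         (use t gap H_graph H_reg sub N4 T_pos \<open>\<eta> < 2 / 9\<close> in auto)
    moreover have "(1 - \<delta>) * real t \<le> (1 - 3 / 2 * \<eta>) * real t"
      using \<open>1 - \<delta> \<le> 1 - 3 / 2 * \<eta>\<close> by (rule mult_right_mono) simp
    ultimately show "\<exists>v<t. real (card (component_on t (H' t) v)) \<ge> (1 - \<delta>) * real t"
      by (meson order_trans)
  qed
qed

end
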